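(* Let $n,m,v\ge1$ and let $S(n,m,v)$ be a memory system satisfying Processor Symmetry and Location Symmetry. Let $\Omega$ be a simple witness for $S(n,m,v)$ and let $\tau$ be an unambiguous trace of $S(n,m,v)$. If the graph $G(\Omega)(\tau)$ has a $k$-nice cycle, then there is an unambiguous trace $\tau''$ of $S(n,m,v)$ such that $G(\Omega)(\tau'')$ has a canonical $k$-nice cycle.
   Context: $\mathbb{N}_n=\{1,\dots,n\}$, $\mathbb{W}_v=\{0,\dots,v\}$. Memory events $E(n,m,v)=\{R,W\}\times\mathbb{N}_n\times\mathbb{N}_m\times\mathbb{W}_v$; for $e=\langle a,b,c,d\rangle$, $op(e)=a$, $proc(e)=b$, $loc(e)=c$, $data(e)=d$; $0$ models the initial value of every location. A memory system $S(n,m,v)$ is a regular set of finite runs over an alphabet containing $E(n,m,v)$ (other letters being internal events); a trace is the subsequence of memory events of a run. For a sequence $\tau$ of memory events with positions $1,\dots,|\tau|$: $P(\tau,i)=\{k: proc(\tau(k))=i\}$, $L(\tau,j)=\{k: loc(\tau(k))=j\}$, $L^w(\tau,j)=\{k\in L(\tau,j): op(\tau(k))=W\}$, $M(\tau,i)=\{\langle u,v\rangle: u,v\in P(\tau,i), u<v\}$. A trace $\tau$ is unambiguous if for every location $j$ and $x\in L^w(\tau,j)$, $data(\tau(x))\ne0$ and $data(\tau(x))\ne data(\tau(y))$ for all $y\in L^w(\tau,j)\setminus\{x\}$. Symmetry: for a permutation $\lambda$ of $\mathbb{N}_n$, $\lambda^p(\langle a,b,c,d\rangle)=\langle a,\lambda(b),c,d\rangle$;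 for a permutation $\lambda$ of $\mathbb{N}_m$, $\lambda^l(\langle a,b,c,d\rangle)=\langle a,b,\lambda(c),d\rangle$; both extended letterwise to sequences. Processor Symmetry: for every permutation $\lambda$ of $\mathbb{N}_n$ and every trace $\tau$ of $S(n,m,v)$, $\lambda^p(\tau)$ is a trace of $S(n,m,v)$. Location Symmetry: for every permutation $\lambda$ of $\mathbb{N}_m$ and every trace $\tau$ of $S(n,m,v)$, $\lambda^l(\tau)$ is a trace of $S(n,m,v)$. A witness $\Omega$ assigns to each trace $\tau$ and location $j$ a strict total order $\Omega(\tau,j)$ on $L^w(\tau,j)$; it is simple if $\langle x,y\rangle\in\Omega(\tau,j)$ iff $x<y$. For unambiguous $\tau$, $\Omega^e(\tau,j)\subseteq L(\tau,j)^2$: $\langle x,y\rangle\in\Omega^e(\tau,j)$ iff (1) $data(\tau(x))=data(\tau(y))$, $op(\tau(x))=W$, $op(\tau(y))=R$; or (2) $data(\tau(x))=0$ and $data(\tau(y))\ne0$; or (3) there are $a,b\in L^w(\tau,j)$ with $\langle a,b\rangle\in\Omega(\tau,j)$, $data(\tau(a))=data(\tau(x))$, $data(\tau(b))=data(\tau(y))$. $G(\Omega)(\tau)$ is the directed graph on $\{1,\dots,|\tau|\}$ with edge set $\bigcup_{i}M(\tau,i)\cup\bigcup_{j}\Omega^e(\tau,j)$. For $k\ge1$, $\oplus$ is addition in the cyclic group on $\mathbb{N}_k$ with identity $k$ ($x\oplus1=x+1$ for $x<k$, $k\oplus1=1$). A $k$-nice cycle in $G(\Omega)(\tau)$ is a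 sequence $u_1,v_1,\dots,u_k,v_k$ of pairwise distinct vertices such that: (i) for every $x$, $\langle u_x,v_x\rangle\in M(\tau,i)$ for some processor $i$ and $\langle v_x,u_{x\oplus1}\rangle\in\Omega^e(\tau,j)$ for some location $j$; (ii) the processors $i$ for distinct $x$ are distinct; (iii) the locations $j$ for distinct $x$ are distinct. A $k$-nice cycle is canonical if $\langle u_x,v_x\rangle\in M(\tau,x)$ and $\langle v_x,u_{x\oplus1}\rangle\in\Omega^e(\tau,x\oplus1)$ for all $1\le x\le k$. *)

theory Defs
  imports Main
begin

datatype opr = R | W

type_synonym event = "opr \<times> nat \<times> nat \<times> nat"

definition op :: "event \<Rightarrow> opr" where "op e = fst e"
definition proc :: "event \<Rightarrow> nat" where "proc e = fst (snd e)"
definition loc :: "event \<Rightarrow> nat" where "loc e = fst (snd (snd e))"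
definition data :: "event \<Rightarrow> nat" where "data e = snd (snd (snd e))"

definition Ev :: "nat \<Rightarrow> nat \<Rightarrow> nat \<Rightarrow> event set" where
  "Ev n m v = UNIV \<times> {1..n} \<times> {1..m} \<times> {0..v}"

datatype 'i letter = Mem event | Internal 'i

fun trace_of :: "'i letter list \<Rightarrow> event list" where
  "trace_of [] = []"
| "trace_of (Mem e # w) = e # trace_of w"
| "trace_of (Internal x # w) = trace_of w"

definition regular_over :: "'a set \<Rightarrow> 'a list set \<Rightarrow> bool" where
  "regular_over \<Sigma> L \<longleftrightarrow> finite \<Sigma> \<and>
     (\<exists>(Q::nat set) (\<delta>::nat \<Rightarrow> 'a \<Rightarrow> nat) q0 F.
        finite Q \<and> q0 \<in> Q \<and> F \<subseteq> Q \<and> (\<forall>q\<in>Q. \<forall>a\<in>\<Sigma>. \<delta> q a \<in> Q) \<and>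
        L = {w \<in> lists \<Sigma>. foldl \<delta> q0 w \<in> F})"

definition memory_system :: "nat \<Rightarrow> nat \<Rightarrow> nat \<Rightarrow> 'i letter set \<Rightarrow> 'i letter list set \<Rightarrow> bool" where
  "memory_system n m v \<Sigma> S \<longleftrightarrow>
     {e. Mem e \<in> \<Sigma>} = Ev n m v \<and> regular_over \<Sigma> S"

definition traces :: "'i letter list set \<Rightarrow> event list set" where
  "traces S = trace_of ` S"

definition ev :: "event list \<Rightarrow> nat \<Rightarrow> event" where
  "ev \<tau> k = \<tau> ! (k - 1)"

definition Pp :: "event list \<Rightarrow> nat \<Rightarrow> nat set" where
  "Pp \<tau> i = {k \<in> {1..length \<tau>}. proc (ev \<tau> k) = i}"

definition L :: "event list \<Rightarrow> nat \<Rightarrow> nat set" where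
  "L \<tau> j = {k \<in> {1..length \<tau>}. loc (ev \<tau> k) = j}"

definition Lw :: "event list \<Rightarrow> nat \<Rightarrow> nat set" where
  "Lw \<tau> j = {k \<in> L \<tau> j. op (ev \<tau> k) = W}"

definition M :: "event list \<Rightarrow> nat \<Rightarrow> (nat \<times> nat) set" where
  "M \<tau> i = {(u, w). u \<in> Pp \<tau> i \<and> w \<in> Pp \<tau> i \<and> u < w}"

definition unambiguous :: "event list \<Rightarrow> bool" where
  "unambiguous \<tau> \<longleftrightarrow> (\<forall>j. \<forall>x\<in>Lw \<tau> j. data (ev \<tau> x) \<noteq> 0 \<and>
      (\<forall>y\<in>Lw \<tau> j - {x}. data (ev \<tau> x) \<noteq> data (ev \<tau> y)))"

definition perm_p :: "(nat \<Rightarrow> nat) \<Rightarrow> event \<Rightarrow> event" where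
  "perm_p lam e = (op e, lam (proc e), loc e, data e)"

definition perm_l :: "(nat \<Rightarrow> nat) \<Rightarrow> event \<Rightarrow> event" where
  "perm_l lam e = (op e, proc e, lam (loc e), data e)"

definition processor_symmetry :: "nat \<Rightarrow> 'i letter list set \<Rightarrow> bool" where
  "processor_symmetry n S \<longleftrightarrow> (\<forall>lam \<tau>. bij_betw lam {1..n} {1..n} \<longrightarrow> \<tau> \<in> traces S \<longrightarrow>
      map (perm_p lam) \<tau> \<in> traces S)"

definition location_symmetry :: "nat \<Rightarrow> 'i letter list set \<Rightarrow> bool" where
  "location_symmetry m S \<longleftrightarrow> (\<forall>lam \<tau>. bij_betw lam {1..m} {1..m} \<longrightarrow> \<tau> \<in> traces S \<longrightarrow>
      map (perm_l lam) \<tau> \<in> traces S)"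

type_synonym witness = "event list \<Rightarrow> nat \<Rightarrow> (nat \<times> nat) set"

definition strict_total_order_on :: "'a set \<Rightarrow> ('a \<times> 'a) set \<Rightarrow> bool" where
  "strict_total_order_on A r \<longleftrightarrow> r \<subseteq> A \<times> A \<and> irrefl r \<and> trans r \<and> total_on A r"

definition is_witness :: "nat \<Rightarrow> 'i letter list set \<Rightarrow> witness \<Rightarrow> bool" where
  "is_witness m S \<Omega> \<longleftrightarrow> (\<forall>\<tau>\<in>traces S. \<forall>j\<in>{1..m}. strict_total_order_on (Lw \<tau> j) (\<Omega> \<tau> j))"

definition simple_witness :: "nat \<Rightarrow> 'i letter list set \<Rightarrow> witness \<Rightarrow> bool" where
  "simple_witness m S \<Omega> \<longleftrightarrow> is_witness m S \<Omega> \<and>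
     (\<forall>\<tau>\<in>traces S. \<forall>j\<in>{1..m}. \<forall>x\<in>Lw \<tau> j. \<forall>y\<in>Lw \<tau> j. (x, y) \<in> \<Omega> \<tau> j \<longleftrightarrow> x < y)"

definition Omega_e :: "witness \<Rightarrow> event list \<Rightarrow> nat \<Rightarrow> (nat \<times> nat) set" where
  "Omega_e \<Omega> \<tau> j = {(x, y). x \<in> L \<tau> j \<and> y \<in> L \<tau> j \<and>
     ((data (ev \<tau> x) = data (ev \<tau> y) \<and> op (ev \<tau> x) = W \<and> op (ev \<tau> y) = R)
      \<or> (data (ev \<tau> x) = 0 \<and> data (ev \<tau> y) \<noteq> 0)
      \<or> (\<exists>a\<in>Lw \<tau> j. \<exists>b\<in>Lw \<tau> j. (a, b) \<in> \<Omega> \<tau> j \<and>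
            data (ev \<tau> a) = data (ev \<tau> x) \<and> data (ev \<tau> b) = data (ev \<tau> y)))}"

text \<open>Edge set of the graph G(\<Omega>)(\<tau>) on vertices {1..|\<tau>|}.\<close>
definition G_edges :: "nat \<Rightarrow> nat \<Rightarrow> witness \<Rightarrow> event list \<Rightarrow> (nat \<times> nat) set" where
  "G_edges n m \<Omega> \<tau> = (\<Union>i\<in>{1..n}. M \<tau> i) \<union> (\<Union>j\<in>{1..m}. Omega_e \<Omega> \<tau> j)"

definition cplus1 :: "nat \<Rightarrow> nat \<Rightarrow> nat" where
  "cplus1 k x = (if x < k then x + 1 else 1)"

text \<open>A k-nice cycle u_1,v_1,...,u_k,v_k (given by functions us, vs on {1..k}).\<close>
definition nice_cycle :: "nat \<Rightarrow> nat \<Rightarrow> witness \<Rightarrow> event list \<Rightarrow> nat \<Rightarrow>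
    (nat \<Rightarrow> nat) \<Rightarrow> (nat \<Rightarrow> nat) \<Rightarrow> bool" where
  "nice_cycle n m \<Omega> \<tau> k us vs \<longleftrightarrow> k \<ge> 1 \<and>
     inj_on us {1..k} \<and> inj_on vs {1..k} \<and> us ` {1..k} \<inter> vs ` {1..k} = {} \<and>
     (\<exists>p l. (\<forall>x\<in>{1..k}. p x \<in> {1..n} \<and> (us x, vs x) \<in> M \<tau> (p x) \<and>
                         l x \<in> {1..m} \<and> (vs x, us (cplus1 k x)) \<in> Omega_e \<Omega> \<tau> (l x))
            \<and> inj_on p {1..k} \<and> inj_on l {1..k})"

definition canonical_nice_cycle :: "nat \<Rightarrow> nat \<Rightarrow> witness \<Rightarrow> event list \<Rightarrow> nat \<Rightarrow>
    (nat \<Rightarrow> nat) \<Rightarrow> (nat \<Rightarrow> nat) \<Rightarrow> bool" where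
  "canonical_nice_cycle n m \<Omega> \<tau> k us vs \<longleftrightarrow> nice_cycle n m \<Omega> \<tau> k us vs \<and>
     (\<forall>x\<in>{1..k}. (us x, vs x) \<in> M \<tau> x \<and>
                 (vs x, us (cplus1 k x)) \<in> Omega_e \<Omega> \<tau> (cplus1 k x))"

end

theory Submission
  imports Defs "HOL-Combinatorics.Permutations"
begin

text \<open>Renaming processors and locations by permutations moves no event, so positions,
  operations and data are unchanged, and two positions share a processor (a location) after the
  renaming iff they did before. Hence M and \<Omega>^e are merely reindexed, provided the witness
  depends only on positions, as a simple witness does. If the x-th program-order edge of a
  k-nice cycle lies in processor p(x) and its x-th \<Omega>^e-edge at location l(x), injectivity of
  p and l gives permutations sending p(x) to x and l(x) to x \<oplus> 1; by symmetry the renamed trace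
  is again a trace, and the same vertices form a canonical k-nice cycle in it.\<close>

lemma inj_on_atLeastAtMost_le:
  fixes f :: "nat \<Rightarrow> nat"
  assumes "inj_on f {1..k}" "f ` {1..k} \<subseteq> {1..n}"
  shows "k \<le> n"
  using card_inj_on_le[OF assms] by simp

lemma inj_on_extend_permutes:
  assumes "finite A" "D \<subseteq> A" "inj_on f D" "f ` D \<subseteq> A"
  obtains lam where "lam permutes A" "\<And>x. x \<in> D \<Longrightarrow> lam x = f x"
proof -
  have "finite D"
    using assms(1,2) finite_subset by blast
  then have "card (A - D) = card (A - f ` D)"
    using assms by (simp add: card_Diff_subset card_image)
  then obtain h where h: "bij_betw h (A - D) (A - f ` D)"
    using finite_same_card_bij assms(1) by (metis finite_Diff)
  define lam where "lam x = (if x \<in> D then f x else if x \<in> A then h x else x)" for x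
  have "bij_betw lam D (f ` D)"
    using inj_on_imp_bij_betw[OF assms(3)] by (rule bij_betw_cong[THEN iffD1, rotated]) (simp add: lam_def)
  moreover have "bij_betw lam (A - D) (A - f ` D)"
    using h by (rule bij_betw_cong[THEN iffD1, rotated]) (simp add: lam_def)
  ultimately have "bij_betw lam (D \<union> (A - D)) (f ` D \<union> (A - f ` D))"
    by (rule bij_betw_combine) auto
  moreover have "D \<union> (A - D) = A" "f ` D \<union> (A - f ` D) = A"
    using assms by auto
  ultimately have "bij_betw lam A A"
    by simp
  then have "lam permutes A"
    by (rule bij_imp_permutes) (use assms(2) in \<open>auto simp: lam_def\<close>)
  then show thesis
    using that by (simp add: lam_def)
qed

lemma ex_permutes_mapping:
  assumes "finite A" "inj_on p D" "inj_on q D" "p ` D \<subseteq> A" "q ` D \<subseteq> A"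
  obtains lam where "lam permutes A" "\<And>x. x \<in> D \<Longrightarrow> lam (p x) = q x"
proof -
  have "inj_on (q \<circ> inv_into D p) (p ` D)"
    using assms(2,3) by (metis comp_inj_on inj_on_inv_into inv_into_image_cancel subset_refl)
  moreover have "(q \<circ> inv_into D p) ` p ` D \<subseteq> A"
    using assms(2,5) by auto
  ultimately obtain lam where "lam permutes A" "\<And>y. y \<in> p ` D \<Longrightarrow> lam y = (q \<circ> inv_into D p) y"
    by (rule inj_on_extend_permutes[OF assms(1,4)]) blast
  then show thesis
    using that assms(2) by simp
qed

lemma inj_on_cplus1: "inj_on (cplus1 k) {1..k}"
  unfolding cplus1_def inj_on_def by auto

lemma cplus1_in_atLeastAtMost: "x \<in> {1..k} \<Longrightarrow> cplus1 k x \<in> {1..k}"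
  unfolding cplus1_def by auto

definition relabel :: "(nat \<Rightarrow> nat) \<Rightarrow> (nat \<Rightarrow> nat) \<Rightarrow> event \<Rightarrow> event" where
  "relabel lp ll e = (op e, lp (proc e), ll (loc e), data e)"

lemma perm_p_perm_l: "perm_p lp (perm_l ll e) = relabel lp ll e"
  by (simp add: perm_p_def perm_l_def relabel_def op_def proc_def loc_def data_def)

lemma relabel_simps [simp]:
  "op (relabel lp ll e) = op e" "proc (relabel lp ll e) = lp (proc e)"
  "loc (relabel lp ll e) = ll (loc e)" "data (relabel lp ll e) = data e"
  by (simp_all add: relabel_def op_def proc_def loc_def data_def)

lemma ev_map: "k \<in> {1..length \<tau>} \<Longrightarrow> ev (map f \<tau>) k = f (ev \<tau> k)"
  unfolding ev_def by (subst nth_map) auto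

lemma relabel_in_traces:
  assumes "processor_symmetry n S" "location_symmetry m S"
    and "lp permutes {1..n}" "ll permutes {1..m}" "\<tau> \<in> traces S"
  shows "map (relabel lp ll) \<tau> \<in> traces S"
proof -
  have "map (perm_l ll) \<tau> \<in> traces S"
    using assms(2,4,5) permutes_imp_bij unfolding location_symmetry_def by blast
  then have "map (perm_p lp) (map (perm_l ll) \<tau>) \<in> traces S"
    using assms(1,3) permutes_imp_bij unfolding processor_symmetry_def by blast
  then show ?thesis
    by (simp add: perm_p_perm_l comp_def)
qed

lemma Pp_relabel: "inj lp \<Longrightarrow> Pp (map (relabel lp ll) \<tau>) (lp i) = Pp \<tau> i"
  unfolding Pp_def by (auto simp: ev_map inj_eq)

lemma M_relabel: "inj lp \<Longrightarrow> M (map (relabel lp ll) \<tau>) (lp i) = M \<tau> i"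
  unfolding M_def by (simp add: Pp_relabel)

lemma L_relabel: "inj ll \<Longrightarrow> L (map (relabel lp ll) \<tau>) (ll j) = L \<tau> j"
  unfolding L_def by (auto simp: ev_map inj_eq)

lemma Lw_relabel: "inj ll \<Longrightarrow> Lw (map (relabel lp ll) \<tau>) (ll j) = Lw \<tau> j"
  unfolding Lw_def by (auto simp: L_relabel) (auto simp: L_def ev_map)

lemma unambiguous_relabel:
  assumes "inj ll" "unambiguous \<tau>"
  shows "unambiguous (map (relabel lp ll) \<tau>)"
  unfolding unambiguous_def
proof (intro allI ballI)
  fix j x
  assume x: "x \<in> Lw (map (relabel lp ll) \<tau>) j"
  then have x_pos: "x \<in> {1..length \<tau>}"
    by (simp add: Lw_def L_def)
  define j\<^sub>0 where "j\<^sub>0 = loc (ev \<tau> x)"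
  have j: "j = ll j\<^sub>0"
    using x x_pos by (auto simp: Lw_def L_def ev_map j\<^sub>0_def)
  have data_eq: "data (ev (map (relabel lp ll) \<tau>) y) = data (ev \<tau> y)" if "y \<in> Lw \<tau> j\<^sub>0" for y
    using that by (simp add: Lw_def L_def ev_map)
  show "data (ev (map (relabel lp ll) \<tau>) x) \<noteq> 0 \<and>
      (\<forall>y\<in>Lw (map (relabel lp ll) \<tau>) j - {x}.
         data (ev (map (relabel lp ll) \<tau>) x) \<noteq> data (ev (map (relabel lp ll) \<tau>) y))"
    using assms(2) x unfolding j Lw_relabel[OF assms(1)] unambiguous_def by (simp add: data_eq)
qed

lemma Omega_e_relabel:
  assumes "inj ll"
    and "\<forall>a\<in>Lw \<tau> j. \<forall>b\<in>Lw \<tau> j. (a, b) \<in> \<Omega> (map (relabel lp ll) \<tau>) (ll j) \<longleftrightarrow> (a, b) \<in> \<Omega> \<tau> j"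
  shows "Omega_e \<Omega> (map (relabel lp ll) \<tau>) (ll j) = Omega_e \<Omega> \<tau> j"
proof -
  have op_eq: "op (ev (map (relabel lp ll) \<tau>) x) = op (ev \<tau> x)" if "x \<in> L \<tau> j" for x
    using that by (simp add: L_def ev_map)
  have data_eq: "data (ev (map (relabel lp ll) \<tau>) x) = data (ev \<tau> x)" if "x \<in> L \<tau> j" for x
    using that by (simp add: L_def ev_map)
  have "Lw \<tau> j \<subseteq> L \<tau> j"
    by (auto simp: Lw_def)
  then have exists_eq: "(\<exists>a\<in>Lw \<tau> j. \<exists>b\<in>Lw \<tau> j. (a, b) \<in> \<Omega> (map (relabel lp ll) \<tau>) (ll j) \<and>
        data (ev (map (relabel lp ll) \<tau>) a) = X \<and> data (ev (map (relabel lp ll) \<tau>) b) = Y) \<longleftrightarrow>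
      (\<exists>a\<in>Lw \<tau> j. \<exists>b\<in>Lw \<tau> j. (a, b) \<in> \<Omega> \<tau> j \<and> data (ev \<tau> a) = X \<and> data (ev \<tau> b) = Y)" for X Y
    using assms(2) data_eq by (smt (verit) subsetD)
  show ?thesis
    unfolding Omega_e_def L_relabel[OF assms(1)] Lw_relabel[OF assms(1)]
    by (intro Collect_cong prod.case_cong refl conj_cong disj_cong) (simp_all add: op_eq data_eq exists_eq)
qed

lemma simple_witness_Omega_e_relabel:
  assumes "simple_witness m S \<Omega>" "\<tau> \<in> traces S" "map (relabel lp ll) \<tau> \<in> traces S"
    and "inj ll" "j \<in> {1..m}" "ll j \<in> {1..m}"
  shows "Omega_e \<Omega> (map (relabel lp ll) \<tau>) (ll j) = Omega_e \<Omega> \<tau> j"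
proof (rule Omega_e_relabel[OF assms(4)], intro ballI)
  fix a b
  assume "a \<in> Lw \<tau> j" "b \<in> Lw \<tau> j"
  then show "(a, b) \<in> \<Omega> (map (relabel lp ll) \<tau>) (ll j) \<longleftrightarrow> (a, b) \<in> \<Omega> \<tau> j"
    using assms unfolding simple_witness_def by (simp add: Lw_relabel)
qed

lemma canonical_nice_cycleI:
  assumes "1 \<le> k" "k \<le> n" "k \<le> m"
    and "inj_on us {1..k}" "inj_on vs {1..k}" "us ` {1..k} \<inter> vs ` {1..k} = {}"
    and "\<forall>x\<in>{1..k}. (us x, vs x) \<in> M \<tau> x \<and> (vs x, us (cplus1 k x)) \<in> Omega_e \<Omega> \<tau> (cplus1 k x)"
  shows "canonical_nice_cycle n m \<Omega> \<tau> k us vs"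
proof -
  have "\<forall>x\<in>{1..k}. x \<in> {1..n} \<and> (us x, vs x) \<in> M \<tau> x \<and>
      cplus1 k x \<in> {1..m} \<and> (vs x, us (cplus1 k x)) \<in> Omega_e \<Omega> \<tau> (cplus1 k x)"
    using assms(2,3,7) cplus1_in_atLeastAtMost by (fastforce intro: order_trans)
  then have "\<exists>p l. (\<forall>x\<in>{1..k}. p x \<in> {1..n} \<and> (us x, vs x) \<in> M \<tau> (p x) \<and>
      l x \<in> {1..m} \<and> (vs x, us (cplus1 k x)) \<in> Omega_e \<Omega> \<tau> (l x)) \<and> inj_on p {1..k} \<and> inj_on l {1..k}"
    using inj_on_cplus1 inj_on_id2 by (intro exI[of _ "\<lambda>x. x"] exI[of _ "cplus1 k"]) simp
  then show ?thesis
    unfolding canonical_nice_cycle_def nice_cycle_def using assms(1,4-7) by blast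
qed

lemma nice_cycle_length_le:
  assumes "nice_cycle n m \<Omega> \<tau> k us vs"
  shows "k \<le> n" "k \<le> m"
proof -
  obtain p l where "inj_on p {1..k}" "inj_on l {1..k}"
    and "p ` {1..k} \<subseteq> {1..n}" "l ` {1..k} \<subseteq> {1..m}"
    using assms unfolding nice_cycle_def by (metis (no_types, lifting) image_subsetI)
  then show "k \<le> n" "k \<le> m"
    by (simp_all add: inj_on_atLeastAtMost_le)
qed

lemma nice_cycle_canonical_renaming:
  assumes "nice_cycle n m \<Omega> \<tau> k us vs"
  obtains lp ll where "lp permutes {1..n}" "ll permutes {1..m}"
    and "\<And>x. x \<in> {1..k} \<Longrightarrow> \<exists>i. lp i = x \<and> (us x, vs x) \<in> M \<tau> i"
    and "\<And>x. x \<in> {1..k} \<Longrightarrow>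
      \<exists>j\<in>{1..m}. ll j = cplus1 k x \<and> (vs x, us (cplus1 k x)) \<in> Omega_e \<Omega> \<tau> j"
proof -
  obtain p l where edges: "\<forall>x\<in>{1..k}. p x \<in> {1..n} \<and> (us x, vs x) \<in> M \<tau> (p x) \<and>
                  l x \<in> {1..m} \<and> (vs x, us (cplus1 k x)) \<in> Omega_e \<Omega> \<tau> (l x)"
    and inj: "inj_on p {1..k}" "inj_on l {1..k}"
    using assms unfolding nice_cycle_def by blast
  have p_range: "p ` {1..k} \<subseteq> {1..n}" and l_range: "l ` {1..k} \<subseteq> {1..m}"
    using edges by auto
  note k = nice_cycle_length_le[OF assms]
  obtain lp where lp: "lp permutes {1..n}" "\<And>x. x \<in> {1..k} \<Longrightarrow> lp (p x) = x"
    by (rule ex_permutes_mapping[of "{1..n}" p "{1..k}" "\<lambda>x. x"]) (use inj p_range k in auto)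
  obtain ll where ll: "ll permutes {1..m}" "\<And>x. x \<in> {1..k} \<Longrightarrow> ll (l x) = cplus1 k x"
  proof (rule ex_permutes_mapping[of "{1..m}" l "{1..k}" "cplus1 k"])
    show "cplus1 k ` {1..k} \<subseteq> {1..m}"
      using k cplus1_in_atLeastAtMost by fastforce
  qed (use inj l_range inj_on_cplus1 in auto)
  show thesis
  proof (rule that[OF lp(1) ll(1)])
    fix x
    assume x: "x \<in> {1..k}"
    show "\<exists>i. lp i = x \<and> (us x, vs x) \<in> M \<tau> i"
      using edges lp(2) x by blast
    show "\<exists>j\<in>{1..m}. ll j = cplus1 k x \<and> (vs x, us (cplus1 k x)) \<in> Omega_e \<Omega> \<tau> j"
      using edges ll(2) x by blast
  qed
qed

lemma canonical_nice_cycle_relabel: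
  assumes "simple_witness m S \<Omega>" "\<tau> \<in> traces S" "map (relabel lp ll) \<tau> \<in> traces S"
    and "inj lp" "ll permutes {1..m}" and cycle: "nice_cycle n m \<Omega> \<tau> k us vs"
    and proc: "\<And>x. x \<in> {1..k} \<Longrightarrow> \<exists>i. lp i = x \<and> (us x, vs x) \<in> M \<tau> i"
    and loc: "\<And>x. x \<in> {1..k} \<Longrightarrow>
      \<exists>j\<in>{1..m}. ll j = cplus1 k x \<and> (vs x, us (cplus1 k x)) \<in> Omega_e \<Omega> \<tau> j"
  shows "canonical_nice_cycle n m \<Omega> (map (relabel lp ll) \<tau>) k us vs"
proof (rule canonical_nice_cycleI)
  show "1 \<le> k" "inj_on us {1..k}" "inj_on vs {1..k}" "us ` {1..k} \<inter> vs ` {1..k} = {}"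
    using cycle unfolding nice_cycle_def by blast+
  show "k \<le> n" "k \<le> m"
    using nice_cycle_length_le[OF cycle] .
  show "\<forall>x\<in>{1..k}. (us x, vs x) \<in> M (map (relabel lp ll) \<tau>) x \<and>
      (vs x, us (cplus1 k x)) \<in> Omega_e \<Omega> (map (relabel lp ll) \<tau>) (cplus1 k x)"
  proof
    fix x
    assume x: "x \<in> {1..k}"
    obtain i where i: "lp i = x" "(us x, vs x) \<in> M \<tau> i"
      using proc[OF x] by blast
    obtain j where j: "j \<in> {1..m}" "ll j = cplus1 k x" "(vs x, us (cplus1 k x)) \<in> Omega_e \<Omega> \<tau> j"
      using loc[OF x] by blast
    have "ll j \<in> {1..m}"
      using j(1) by (simp only: permutes_in_image[OF assms(5)])
    then have "Omega_e \<Omega> (map (relabel lp ll) \<tau>) (ll j) = Omega_e \<Omega> \<tau> j"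
      by (rule simple_witness_Omega_e_relabel[OF assms(1-3) permutes_inj[OF assms(5)] j(1)])
    then show "(us x, vs x) \<in> M (map (relabel lp ll) \<tau>) x \<and>
        (vs x, us (cplus1 k x)) \<in> Omega_e \<Omega> (map (relabel lp ll) \<tau>) (cplus1 k x)"
      using M_relabel[OF assms(4), of ll \<tau> i] i j(2,3) by simp
  qed
qed

theorem theorem7p5:
  fixes n m v k :: nat
    and \<Sigma> :: "'i letter set" and S :: "'i letter list set"
    and \<Omega> :: witness and \<tau> :: "event list"
    and us vs :: "nat \<Rightarrow> nat"
  assumes "n \<ge> 1" and "m \<ge> 1" and "v \<ge> 1"
    and "memory_system n m v \<Sigma> S"
    and "processor_symmetry n S" and "location_symmetry m S"
    and "simple_witness m S \<Omega>"
    and "\<tau> \<in> traces S" and "unambiguous \<tau>"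
    and "nice_cycle n m \<Omega> \<tau> k us vs"
  shows "\<exists>\<tau>''\<in>traces S. unambiguous \<tau>'' \<and>
           (\<exists>us' vs'. canonical_nice_cycle n m \<Omega> \<tau>'' k us' vs')"
proof -
  obtain lp ll where lp: "lp permutes {1..n}" and ll: "ll permutes {1..m}"
    and proc: "\<And>x. x \<in> {1..k} \<Longrightarrow> \<exists>i. lp i = x \<and> (us x, vs x) \<in> M \<tau> i"
    and loc: "\<And>x. x \<in> {1..k} \<Longrightarrow>
      \<exists>j\<in>{1..m}. ll j = cplus1 k x \<and> (vs x, us (cplus1 k x)) \<in> Omega_e \<Omega> \<tau> j"
    using nice_cycle_canonical_renaming[OF assms(10)] by blast
  define \<tau>'' where "\<tau>'' = map (relabel lp ll) \<tau>"
  have "\<tau>'' \<in> traces S"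
    unfolding \<tau>''_def using relabel_in_traces[OF assms(5,6) lp ll assms(8)] .
  moreover have "unambiguous \<tau>''"
    unfolding \<tau>''_def using unambiguous_relabel[OF permutes_inj[OF ll] assms(9)] .
  moreover have "canonical_nice_cycle n m \<Omega> \<tau>'' k us vs"
    unfolding \<tau>''_def
    using canonical_nice_cycle_relabel[OF assms(7,8) calculation(1)[unfolded \<tau>''_def]
        permutes_inj[OF lp] ll assms(10) proc loc] .
  ultimately show ?thesis
    by blast
qed

end
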